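(* Let $R$ be a commutative Bézout ring such that for every $a\in R\setminus J(R)$ the set $Z(a)$ of maximal ideals of $R$ containing $a$ is finite. Then $R$ is strongly completable: for every $n\ge 2$ and all $a_1,\dots,a_n,d\in R$ with $a_1R+\cdots+a_nR=dR$, there is an $n\times n$ matrix over $R$ with first row $(a_1,\dots,a_n)$ and determinant $d$.
   Context: All rings are commutative with identity; $J(R)$ denotes the Jacobson radical. A ring is Bézout if every finitely generated ideal is principal. *)

theory Defs
  imports Main "Jordan_Normal_Form.Determinant"
begin

definition is_ideal :: "'a::comm_ring_1 set \<Rightarrow> bool" where
  "is_ideal I \<longleftrightarrow> 0 \<in> I \<and> (\<forall>x\<in>I. \<forall>y\<in>I. x + y \<in> I) \<and> (\<forall>r. \<forall>x\<in>I. r * x \<in> I)"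

definition ideal_gen :: "'a::comm_ring_1 set \<Rightarrow> 'a set" where
  "ideal_gen S = \<Inter>{I. is_ideal I \<and> S \<subseteq> I}"

definition maximal_ideal :: "'a::comm_ring_1 set \<Rightarrow> bool" where
  "maximal_ideal M \<longleftrightarrow> is_ideal M \<and> M \<noteq> UNIV \<and>
     (\<forall>I. is_ideal I \<and> M \<subseteq> I \<longrightarrow> I = M \<or> I = UNIV)"

definition jacobson :: "'a::comm_ring_1 set" where
  "jacobson = \<Inter>{M. maximal_ideal M}"

definition Zmax :: "'a::comm_ring_1 \<Rightarrow> 'a set set" where
  "Zmax a = {M. maximal_ideal M \<and> a \<in> M}"

definition bezout_ring :: "'a::comm_ring_1 itself \<Rightarrow> bool" where
  "bezout_ring _ \<longleftrightarrow> (\<forall>S::'a set. finite S \<longrightarrow> (\<exists>d. ideal_gen S = ideal_gen {d}))"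

end

theory Submission
  imports Defs
begin

text \<open>
  Write a = d a', b = d b' for a generator d of aR + bR; then d = a x + b y, so
  w = 1 - (a' x + b' y) satisfies d w = 0 and (a', b', w) is unimodular. If a' is not in J(R),
  Chinese remaindering over the finitely many maximal ideals containing a' gives t such that
  (a', b' + t w) is unimodular; if a' is in J(R), already (b', w) is. Hence every pair factors as
  (e u, e v) with u p + v q = 1.

  A row a_1, ..., a_n with a_1 r_1 + ... + a_n r_n = d is completed by induction on n: factor the
  last two entries as (e u, e v), complete the shorter row ending in e to a matrix B of
  determinant d, and split the last column c of B into the two columns u c and v c, appending the
  row (0, ..., 0, -q, p). Expanding along that row gives determinant (u p + v q) det B = d.
\<close>

lemma ideal_zero: "is_ideal I \<Longrightarrow> 0 \<in> I"
  and ideal_add: "is_ideal I \<Longrightarrow> x \<in> I \<Longrightarrow> y \<in> I \<Longrightarrow> x + y \<in> I"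
  and ideal_mult_left: "is_ideal I \<Longrightarrow> x \<in> I \<Longrightarrow> r * x \<in> I"
  unfolding is_ideal_def by auto

lemma ideal_mult_right: "is_ideal I \<Longrightarrow> x \<in> I \<Longrightarrow> x * r \<in> I"
  by (metis ideal_mult_left mult.commute)

lemma ideal_diff: "is_ideal I \<Longrightarrow> x \<in> I \<Longrightarrow> y \<in> I \<Longrightarrow> x - y \<in> I"
  by (metis ideal_add ideal_mult_left diff_conv_add_uminus mult_minus1)

lemma ideal_eq_UNIV_if_one: "is_ideal I \<Longrightarrow> 1 \<in> I \<Longrightarrow> I = UNIV"
  by (metis UNIV_eq_I ideal_mult_left mult.right_neutral)

lemma maximal_ideal_is_ideal: "maximal_ideal M \<Longrightarrow> is_ideal M"
  and maximal_ideal_one_notin: "maximal_ideal M \<Longrightarrow> 1 \<notin> M"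
  unfolding maximal_ideal_def using ideal_eq_UNIV_if_one by blast+

lemma is_ideal_linear_combinations: "is_ideal {a * x + b * y | x y. True}"
  unfolding is_ideal_def
proof (intro conjI ballI allI)
  have "0 = a * 0 + b * 0" by simp
  then show "0 \<in> {a * x + b * y | x y. True}" by blast
next
  fix s t assume "s \<in> {a * x + b * y | x y. True}" "t \<in> {a * x + b * y | x y. True}"
  then obtain x y x' y' where "s = a * x + b * y" "t = a * x' + b * y'" by blast
  then have "s + t = a * (x + x') + b * (y + y')" by (simp add: algebra_simps)
  then show "s + t \<in> {a * x + b * y | x y. True}" by blast
next
  fix r s assume "s \<in> {a * x + b * y | x y. True}"
  then obtain x y where "s = a * x + b * y" by blast
  then have "r * s = a * (r * x) + b * (r * y)" by (simp add: algebra_simps)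
  then show "r * s \<in> {a * x + b * y | x y. True}" by blast
qed

lemma ideal_gen_least: "is_ideal I \<Longrightarrow> S \<subseteq> I \<Longrightarrow> ideal_gen S \<subseteq> I"
  and ideal_gen_superset: "S \<subseteq> ideal_gen S"
  unfolding ideal_gen_def by blast+

lemma ideal_gen_pair_subset: "ideal_gen {a, b} \<subseteq> {a * x + b * y | x y. True}"
proof (rule ideal_gen_least[OF is_ideal_linear_combinations])
  have "a = a * 1 + b * 0" "b = a * 0 + b * 1" by simp_all
  then show "{a, b} \<subseteq> {a * x + b * y | x y. True}" by blast
qed

lemma exists_maximal_ideal_superset:
  assumes I: "is_ideal I" and one: "1 \<notin> I"
  shows "\<exists>M. maximal_ideal M \<and> I \<subseteq> M"
proof -
  let ?P = "{J. is_ideal J \<and> I \<subseteq> J \<and> 1 \<notin> J}"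
  have "\<exists>M\<in>?P. \<forall>J\<in>?P. M \<subseteq> J \<longrightarrow> J = M"
  proof (rule subset_Zorn_nonempty)
    show "?P \<noteq> {}" using I one by blast
  next
    fix C assume "C \<noteq> {}" and chain: "subset.chain ?P C"
    then obtain X0 where "X0 \<in> C" by blast
    have ideals: "\<And>X. X \<in> C \<Longrightarrow> is_ideal X" and sub: "\<And>X. X \<in> C \<Longrightarrow> I \<subseteq> X"
      and no_one: "\<And>X. X \<in> C \<Longrightarrow> 1 \<notin> X"
      and total: "\<And>X Y. X \<in> C \<Longrightarrow> Y \<in> C \<Longrightarrow> X \<subseteq> Y \<or> Y \<subseteq> X"
      using chain unfolding subset.chain_def by blast+
    have "is_ideal (\<Union>C)"
      unfolding is_ideal_def
    proof (intro conjI ballI allI)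
      show "0 \<in> \<Union>C" using \<open>X0 \<in> C\<close> ideal_zero[OF ideals] by blast
    next
      fix x y assume "x \<in> \<Union>C" "y \<in> \<Union>C"
      then obtain X Y where "X \<in> C" "Y \<in> C" "x \<in> X" "y \<in> Y" by blast
      then show "x + y \<in> \<Union>C"
        using total[of X Y] ideal_add[OF ideals[of X]] ideal_add[OF ideals[of Y]] by blast
    next
      fix r x assume "x \<in> \<Union>C"
      then show "r * x \<in> \<Union>C" using ideal_mult_left[OF ideals] by blast
    qed
    then show "\<Union>C \<in> ?P" using \<open>X0 \<in> C\<close> sub no_one by blast
  qed
  then obtain M where M: "M \<in> ?P" and M_max: "\<forall>J\<in>?P. M \<subseteq> J \<longrightarrow> J = M" by blast
  have "maximal_ideal M"
    unfolding maximal_ideal_def using M M_max ideal_eq_UNIV_if_one by blast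
  then show ?thesis using M by blast
qed

lemma exists_combination_eq_one:
  fixes a b :: "'a::comm_ring_1"
  assumes "\<And>M. maximal_ideal M \<Longrightarrow> a \<in> M \<Longrightarrow> b \<in> M \<Longrightarrow> False"
  shows "\<exists>x y. a * x + b * y = 1"
proof (rule ccontr)
  assume "\<nexists>x y. a * x + b * y = 1"
  then have "1 \<notin> {a * x + b * y | x y. True}" by auto
  then obtain M where "maximal_ideal M" "{a * x + b * y | x y. True} \<subseteq> M"
    using exists_maximal_ideal_superset[OF is_ideal_linear_combinations] by blast
  moreover have "a = a * 1 + b * 0" "b = a * 0 + b * 1" by simp_all
  ultimately show False using assms by blast
qed

lemma maximal_ideal_invertible_mod:
  assumes M: "maximal_ideal M" and "x \<notin> M"
  shows "\<exists>r. 1 - x * r \<in> M"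
proof -
  let ?J = "{m + x * r | m r. m \<in> M}"
  have M_ideal: "is_ideal M" using M by (rule maximal_ideal_is_ideal)
  have "is_ideal ?J"
    unfolding is_ideal_def
  proof (intro conjI ballI allI)
    have "0 = 0 + x * 0 \<and> 0 \<in> M" using ideal_zero[OF M_ideal] by simp
    then show "0 \<in> ?J" by blast
  next
    fix s t assume "s \<in> ?J" "t \<in> ?J"
    then obtain m r m' r' where "s = m + x * r" "t = m' + x * r'" "m \<in> M" "m' \<in> M" by blast
    then have "s + t = (m + m') + x * (r + r') \<and> m + m' \<in> M"
      using ideal_add[OF M_ideal] by (simp add: algebra_simps)
    then show "s + t \<in> ?J" by blast
  next
    fix c s assume "s \<in> ?J"
    then obtain m r where "s = m + x * r" "m \<in> M" by blast
    then have "c * s = c * m + x * (c * r) \<and> c * m \<in> M"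
      using ideal_mult_left[OF M_ideal, of m c] by (simp add: algebra_simps)
    then show "c * s \<in> ?J" by blast
  qed
  moreover have "M \<subseteq> ?J"
  proof
    fix m assume "m \<in> M"
    then have "m = m + x * 0 \<and> m \<in> M" by simp
    then show "m \<in> ?J" by blast
  qed
  moreover have "x = 0 + x * 1 \<and> 0 \<in> M" using ideal_zero[OF M_ideal] by simp
  then have "x \<in> ?J" by blast
  ultimately have "?J = UNIV" using M \<open>x \<notin> M\<close> unfolding maximal_ideal_def by blast
  then obtain m r where "1 = m + x * r" "m \<in> M" by blast
  then show ?thesis by (metis add_diff_cancel_right')
qed

lemma maximal_ideals_comaximal:
  assumes M: "maximal_ideal M" and N: "maximal_ideal N" and "M \<noteq> N"
  shows "\<exists>m\<in>M. 1 - m \<in> N"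
proof -
  have "\<not> N \<subseteq> M"
    using M N \<open>M \<noteq> N\<close> maximal_ideal_is_ideal unfolding maximal_ideal_def by blast
  then obtain x where "x \<in> N" "x \<notin> M" by blast
  then obtain r where "1 - x * r \<in> M" using maximal_ideal_invertible_mod[OF M] by blast
  moreover have "1 - (1 - x * r) \<in> N"
    using ideal_mult_right[OF maximal_ideal_is_ideal[OF N] \<open>x \<in> N\<close>] by simp
  ultimately show ?thesis by blast
qed

lemma maximal_ideal_separates_finite:
  assumes M: "maximal_ideal M" and "finite F" and "\<forall>N\<in>F. maximal_ideal N" and "M \<notin> F"
  shows "\<exists>m\<in>M. \<forall>N\<in>F. 1 - m \<in> N"
  using assms(2-)
proof (induction F rule: finite_induct)
  case empty
  show ?case using ideal_zero[OF maximal_ideal_is_ideal[OF M]] by blast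
next
  case (insert N F)
  then obtain m where m: "m \<in> M" "\<forall>N\<in>F. 1 - m \<in> N" by auto
  obtain m' where m': "m' \<in> M" "1 - m' \<in> N"
    using maximal_ideals_comaximal[OF M, of N] insert by auto
  have "1 - (m + m' - m * m') = (1 - m) * (1 - m')" by (simp add: algebra_simps)
  moreover have "(1 - m) * (1 - m') \<in> N'" if "N' \<in> insert N F" for N'
  proof -
    have "is_ideal N'" using that insert.prems maximal_ideal_is_ideal by blast
    then show ?thesis
      using that m(2) m'(2) ideal_mult_left[of N' "1 - m'"] ideal_mult_right[of N' "1 - m"] by blast
  qed
  moreover have "m + m' - m * m' \<in> M"
    using m m' maximal_ideal_is_ideal[OF M] by (blast intro: ideal_diff ideal_add ideal_mult_left)
  ultimately show ?case by metis
qed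

lemma maximal_ideals_chinese_remainder:
  assumes "finite A" "finite B" "\<forall>M\<in>A \<union> B. maximal_ideal M" "A \<inter> B = {}"
  shows "\<exists>t. (\<forall>M\<in>A. t \<in> M) \<and> (\<forall>N\<in>B. 1 - t \<in> N)"
  using assms
proof (induction A rule: finite_induct)
  case empty
  show ?case using empty.prems by (intro exI[of _ 1]) (simp add: ideal_zero maximal_ideal_is_ideal)
next
  case (insert M A)
  then obtain t where t: "\<forall>M\<in>A. t \<in> M" "\<forall>N\<in>B. 1 - t \<in> N" by auto
  obtain m where m: "m \<in> M" "\<forall>N\<in>B. 1 - m \<in> N"
    using maximal_ideal_separates_finite[of M B] insert by auto
  have "1 - t * m = (1 - t) + t * (1 - m)" by (simp add: algebra_simps)
  moreover have "(1 - t) + t * (1 - m) \<in> N" if "N \<in> B" for N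
  proof -
    have "is_ideal N" using that insert.prems maximal_ideal_is_ideal by blast
    then show ?thesis using that t(2) m(2) by (blast intro: ideal_add ideal_mult_left)
  qed
  moreover have "t * m \<in> M'" if "M' \<in> insert M A" for M'
  proof -
    have "is_ideal M'" using that insert.prems maximal_ideal_is_ideal by blast
    then show ?thesis
      using that t(1) m(1) ideal_mult_left[of M' m] ideal_mult_right[of M' t] by blast
  qed
  ultimately show ?case by metis
qed

lemma ideal_combination3_mem:
  "is_ideal I \<Longrightarrow> u \<in> I \<Longrightarrow> v \<in> I \<Longrightarrow> w \<in> I \<Longrightarrow> u * x + v * y + w * z \<in> I"
  by (intro ideal_add ideal_mult_right)

lemma stable_range_two:
  fixes u v w :: "'a::comm_ring_1"
  assumes fin: "\<And>a::'a. a \<notin> jacobson \<Longrightarrow> finite (Zmax a)"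
    and unimodular: "u * x + v * y + w * z = 1"
  shows "\<exists>s t p q. (u + s * w) * p + (v + t * w) * q = 1"
proof (cases "u \<in> jacobson")
  case True
  have "\<exists>x' y'. v * x' + w * y' = 1"
  proof (rule exists_combination_eq_one)
    fix N assume N: "maximal_ideal N" "v \<in> N" "w \<in> N"
    moreover have "u \<in> N" using True N unfolding jacobson_def by blast
    ultimately have "u * x + v * y + w * z \<in> N"
      by (simp add: ideal_combination3_mem maximal_ideal_is_ideal)
    then show False using unimodular maximal_ideal_one_notin[OF N(1)] by simp
  qed
  then obtain x' y' where x'y': "v * x' + w * y' = 1" by blast
  have "(u + (y' * (1 - u)) * w) * 1 + (v + 0 * w) * (x' * (1 - u))
      = u + (1 - u) * (v * x' + w * y')"
    by (simp add: algebra_simps)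
  also have "\<dots> = 1" using x'y' by simp
  finally show ?thesis by blast
next
  case False
  let ?F = "Zmax u"
  have "finite {N\<in>?F. v \<notin> N}" "finite {N\<in>?F. v \<in> N}" using fin[OF False] by simp_all
  moreover have "\<forall>N\<in>{N\<in>?F. v \<notin> N} \<union> {N\<in>?F. v \<in> N}. maximal_ideal N"
    unfolding Zmax_def by blast
  moreover have "{N\<in>?F. v \<notin> N} \<inter> {N\<in>?F. v \<in> N} = {}" by blast
  ultimately obtain t where t: "\<forall>N\<in>{N\<in>?F. v \<notin> N}. t \<in> N" "\<forall>N\<in>{N\<in>?F. v \<in> N}. 1 - t \<in> N"
    by (metis (no_types, lifting) maximal_ideals_chinese_remainder)
  have "\<exists>p q. u * p + (v + t * w) * q = 1"
  proof (rule exists_combination_eq_one)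
    fix N assume N: "maximal_ideal N" "u \<in> N" "v + t * w \<in> N"
    then have ideal: "is_ideal N" and "N \<in> ?F"
      using maximal_ideal_is_ideal unfolding Zmax_def by auto
    show False
    proof (cases "v \<in> N")
      case True
      then have "1 - t \<in> N" using t(2) \<open>N \<in> ?F\<close> by blast
      then have "(v + t * w) - v + w * (1 - t) \<in> N"
        using ideal_add[OF ideal ideal_diff[OF ideal N(3) True] ideal_mult_left[OF ideal]] by blast
      then have "w \<in> N" by (simp add: algebra_simps)
      have "u * x + v * y + w * z \<in> N"
        using ideal N(2) True \<open>w \<in> N\<close> by (rule ideal_combination3_mem)
      then show False using unimodular maximal_ideal_one_notin[OF N(1)] by simp
    next
      case False
      then have "t \<in> N" using t(1) \<open>N \<in> ?F\<close> by blast
      then have "(v + t * w) - t * w \<in> N"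
        using ideal_diff[OF ideal N(3) ideal_mult_right[OF ideal]] by blast
      then show False using False by simp
    qed
  qed
  then obtain p q where "(u + 0 * w) * p + (v + t * w) * q = 1" by auto
  then show ?thesis by blast
qed

lemma hermite_factorization:
  fixes a b :: "'a::comm_ring_1"
  assumes bez: "bezout_ring TYPE('a)"
    and fin: "\<And>a::'a. a \<notin> jacobson \<Longrightarrow> finite (Zmax a)"
  shows "\<exists>e u v p q. a = e * u \<and> b = e * v \<and> u * p + v * q = 1"
proof -
  obtain d :: 'a where d: "ideal_gen {a, b} = ideal_gen {d}"
    using bez unfolding bezout_ring_def by (meson finite.emptyI finite_insert)
  have "a \<in> ideal_gen {d}" "b \<in> ideal_gen {d}" using d ideal_gen_superset by blast+
  moreover have "{d * x + d * y | x y. True} \<subseteq> {d * x | x. True}"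
    by (force simp flip: distrib_left)
  then have "ideal_gen {d} \<subseteq> {d * x | x. True}"
    using ideal_gen_pair_subset[of d d] by simp
  ultimately obtain a' b' where a': "a = d * a'" and b': "b = d * b'" by blast
  have "d \<in> ideal_gen {a, b}" using d ideal_gen_superset by blast
  then have "d \<in> {a * x + b * y | x y. True}" using ideal_gen_pair_subset by blast
  then obtain x y where xy: "d = a * x + b * y" by auto
  \<comment> \<open>Since d * w = 0, adding multiples of w to a' and b' does not change d * a' and d * b'.\<close>
  define w where "w = 1 - (a' * x + b' * y)"
  have dw: "d * w = 0" unfolding w_def using xy a' b' by (simp add: algebra_simps)
  have "a' * x + b' * y + w * 1 = 1" unfolding w_def by simp
  then obtain s t p q where "(a' + s * w) * p + (b' + t * w) * q = 1"
    using stable_range_two[OF fin] by blast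
  moreover have "a = d * (a' + s * w)" "b = d * (b' + t * w)"
    using a' b' dw by (simp_all add: distrib_left mult.left_commute[of d])
  ultimately show ?thesis by blast
qed

definition expand_last_column :: "'a::comm_ring_1 mat \<Rightarrow> 'a \<Rightarrow> 'a \<Rightarrow> 'a \<Rightarrow> 'a \<Rightarrow> 'a mat" where
  "expand_last_column B u v p q = (let n = dim_row B; k = n - 1 in
     mat (Suc n) (Suc n) (\<lambda>(i, j).
       if i < n then (if j < k then B $$ (i, j) else if j = k then B $$ (i, k) * u else B $$ (i, k) * v)
       else (if j < k then 0 else if j = k then - q else p)))"

lemma expand_last_column_carrier:
  "B \<in> carrier_mat (Suc k) (Suc k) \<Longrightarrow>
    expand_last_column B u v p q \<in> carrier_mat (Suc (Suc k)) (Suc (Suc k))"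
  unfolding expand_last_column_def by simp

lemma expand_last_column_first_row:
  assumes "B \<in> carrier_mat (Suc k) (Suc k)" and "j < Suc (Suc k)"
  shows "expand_last_column B u v p q $$ (0, j) =
    (if j < k then B $$ (0, j) else if j = k then B $$ (0, k) * u else B $$ (0, k) * v)"
  using assms unfolding expand_last_column_def by simp

lemma det_expand_last_column:
  fixes B :: "'a::comm_ring_1 mat"
  assumes B: "B \<in> carrier_mat (Suc k) (Suc k)"
  shows "det (expand_last_column B u v p q) = (u * p + v * q) * det B"
proof -
  define A where "A = expand_last_column B u v p q"
  have A: "A \<in> carrier_mat (Suc (Suc k)) (Suc (Suc k))"
    unfolding A_def using B by (rule expand_last_column_carrier)
  have A_last_row: "A $$ (Suc k, j) = (if j < k then 0 else if j = k then - q else p)"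
    if "j < Suc (Suc k)" for j
    using B that unfolding A_def expand_last_column_def by simp
  have scaled_last_column: "det (transpose_mat (multrow k c (transpose_mat B))) = c * det B" for c
  proof -
    have BT: "transpose_mat B \<in> carrier_mat (Suc k) (Suc k)" using B by simp
    then have "det (transpose_mat (multrow k c (transpose_mat B))) = det (multrow k c (transpose_mat B))"
      by (intro det_transpose) simp
    then show ?thesis using det_multrow[OF _ BT, of k c] det_transpose[OF B] by simp
  qed
  have "mat_delete A (Suc k) k = transpose_mat (multrow k v (transpose_mat B))"
    "mat_delete A (Suc k) (Suc k) = transpose_mat (multrow k u (transpose_mat B))"
    using B by (auto intro!: eq_matI simp: A_def expand_last_column_def mat_delete_def mat_multrow_def)
  then have cofactors: "cofactor A (Suc k) k = - (v * det B)" "cofactor A (Suc k) (Suc k) = u * det B"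
    unfolding cofactor_def using scaled_last_column by (simp_all add: power_add)
  have "det A = (\<Sum>j<Suc (Suc k). A $$ (Suc k, j) * cofactor A (Suc k) j)"
    using A by (rule laplace_expansion_row) simp
  also have "\<dots> = A $$ (Suc k, k) * cofactor A (Suc k) k + A $$ (Suc k, Suc k) * cofactor A (Suc k) (Suc k)"
    using A_last_row by (simp add: lessThan_Suc)
  also have "\<dots> = (u * p + v * q) * det B"
    using A_last_row cofactors by (simp add: algebra_simps)
  finally show ?thesis unfolding A_def .
qed

lemma first_row_completion:
  fixes a r :: "nat \<Rightarrow> 'a::comm_ring_1"
  assumes hermite: "\<And>a b::'a. \<exists>e u v p q. a = e * u \<and> b = e * v \<and> u * p + v * q = 1"
  shows "\<exists>A \<in> carrier_mat (Suc (Suc m)) (Suc (Suc m)).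
    (\<forall>j<Suc (Suc m). A $$ (0, j) = a j) \<and> det A = (\<Sum>i<Suc (Suc m). a i * r i)"
proof (induction m arbitrary: a r)
  case 0
  let ?A = "expand_last_column (1\<^sub>m 1) (a 0) (a 1) (r 0) (r 1)"
  have "?A \<in> carrier_mat 2 2" "det ?A = a 0 * r 0 + a 1 * r 1"
    using expand_last_column_carrier[of "1\<^sub>m 1" 0] det_expand_last_column[of "1\<^sub>m 1" 0]
    by (simp_all add: numeral_2_eq_2)
  moreover have "?A $$ (0, j) = a j" if "j < 2" for j
    using expand_last_column_first_row[of "1\<^sub>m 1" 0 j] that by (auto simp: less_2_cases_iff)
  ultimately show ?case by (auto simp: numeral_2_eq_2)
next
  case (Suc m)
  define k where "k = Suc m"
  obtain e u v p q where euv: "a k = e * u" "a (Suc k) = e * v" "u * p + v * q = 1"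
    using hermite by blast
  let ?a = "a(k := e)" and ?r = "r(k := u * r k + v * r (Suc k))"
  have "(\<Sum>i<Suc k. ?a i * ?r i) = (\<Sum>i<Suc (Suc k). a i * r i)"
    using euv by (simp add: algebra_simps)
  then obtain B where B: "B \<in> carrier_mat (Suc k) (Suc k)" "\<forall>j<Suc k. B $$ (0, j) = ?a j"
    "det B = (\<Sum>i<Suc (Suc k). a i * r i)"
    using Suc.IH[of ?a ?r] unfolding k_def by auto
  let ?A = "expand_last_column B u v p q"
  have "?A \<in> carrier_mat (Suc (Suc k)) (Suc (Suc k))"
    using B(1) by (rule expand_last_column_carrier)
  moreover have "det ?A = (\<Sum>i<Suc (Suc k). a i * r i)"
    using det_expand_last_column[OF B(1)] B(3) euv(3) by simp
  moreover have "\<forall>j<Suc (Suc k). ?A $$ (0, j) = a j"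
    using expand_last_column_first_row[OF B(1)] B(2) euv by (auto simp: less_Suc_eq)
  ultimately show ?case unfolding k_def by blast
qed

theorem proposition4p7:
  assumes bez: "bezout_ring TYPE('a::comm_ring_1)"
    and fin: "\<And>a::'a. a \<notin> jacobson \<Longrightarrow> finite (Zmax a)"
  shows "\<forall>(n::nat) (a::nat \<Rightarrow> 'a) (d::'a). n \<ge> 2 \<longrightarrow>
           {(\<Sum>i<n. a i * r i) | r. True} = {d * r | r. True} \<longrightarrow>
           (\<exists>A \<in> carrier_mat n n. (\<forall>j<n. A $$ (0, j) = a j) \<and> det A = d)"
proof (intro allI impI)
  fix n :: nat and a :: "nat \<Rightarrow> 'a" and d :: 'a
  assume "n \<ge> 2" and ideal_eq: "{(\<Sum>i<n. a i * r i) | r. True} = {d * r | r. True}"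
  have "d = d * 1" by simp
  then obtain r where "d = (\<Sum>i<n. a i * r i)" using ideal_eq by blast
  moreover obtain m where "n = Suc (Suc m)" using \<open>n \<ge> 2\<close> by (metis add_2_eq_Suc le_Suc_ex)
  ultimately show "\<exists>A \<in> carrier_mat n n. (\<forall>j<n. A $$ (0, j) = a j) \<and> det A = d"
    using first_row_completion[OF hermite_factorization[OF bez fin]] by blast
qed

end
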